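(* Let $m\ge 1$, $\varphi_0>0$ and $\varphi_1\ge 0$. For $\mathbf{g}\in\mathbb{R}^m$ define $$\hat T(\mathbf{g}) = \varphi_0\big(\max(\mathbf{g})-\min(\mathbf{g})\big)^2+\varphi_1\big(\max(\mathbf{g})-\min(\mathbf{g})\big).$$ Then: (i) $\hat T$ is a convex function on $\mathbb{R}^m$. (ii) Its Legendre–Fenchel conjugate $\hat T^*(\boldsymbol\lambda)=\sup_{\mathbf{g}\in\mathbb{R}^m}\big(\mathbf{g}\cdot\boldsymbol\lambda-\hat T(\mathbf{g})\big)$ is given, for every $\boldsymbol\lambda\in\mathbb{R}^m$, by $$\hat T^*(\boldsymbol\lambda)=\begin{cases} s(\|\boldsymbol\lambda\|_1/2) & \text{if } \sum_c\lambda_c=0,\\ +\infty & \text{otherwise,}\end{cases}\qquad s(x)=\begin{cases}\frac{(x-\varphi_1)^2}{4\varphi_0} & x\ge\varphi_1,\\ 0 & x<\varphi_1.\end{cases}$$ (iii) For every $\mathbf{g}\in\mathbb{R}^m$, $\hat T(\mathbf{g})=\hat T^{**}(\mathbf{g})=\sup_{\boldsymbol\lambda\in\mathbb{R}^m}\big(\mathbf{g}\cdot\boldsymbol\lambda-\hat T^*(\boldsymbol\lambda)\big)$.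
   Context: $\max(\mathbf{g})$ and $\min(\mathbf{g})$ denote the largest and smallest components of the vector $\mathbf{g}$, and $\|\cdot\|_1$ is the $\ell_1$ norm. *)

theory Defs
  imports "HOL-Analysis.Analysis"
begin

definition vmax :: "real ^ 'm \<Rightarrow> real" where
  "vmax g = Max (range (\<lambda>i. g $ i))"

definition vmin :: "real ^ 'm \<Rightarrow> real" where
  "vmin g = Min (range (\<lambda>i. g $ i))"

definition That :: "real \<Rightarrow> real \<Rightarrow> real ^ 'm \<Rightarrow> real" where
  "That \<phi>0 \<phi>1 g = \<phi>0 * (vmax g - vmin g)^2 + \<phi>1 * (vmax g - vmin g)"

definition conjT :: "real \<Rightarrow> real \<Rightarrow> real ^ 'm \<Rightarrow> ereal" where
  "conjT \<phi>0 \<phi>1 lam = (SUP g. ereal (g \<bullet> lam - That \<phi>0 \<phi>1 g))"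

definition biconjT :: "real \<Rightarrow> real \<Rightarrow> real ^ 'm \<Rightarrow> ereal" where
  "biconjT \<phi>0 \<phi>1 g = (SUP lam. ereal (g \<bullet> lam) - conjT \<phi>0 \<phi>1 lam)"

definition sfun :: "real \<Rightarrow> real \<Rightarrow> real \<Rightarrow> real" where
  "sfun \<phi>0 \<phi>1 x = (if x \<ge> \<phi>1 then (x - \<phi>1)^2 / (4 * \<phi>0) else 0)"

definition l1norm :: "real ^ 'm \<Rightarrow> real" where
  "l1norm lam = (\<Sum>i\<in>UNIV. \<bar>lam $ i\<bar>)"

end

theory Submission
  imports Defs
begin

text \<open>
  Write \<open>D(g) = max g - min g\<close> for the spread of \<open>g\<close>, so that \<open>T = h \<circ> D\<close> with the penalty
  \<open>h(D) = \<phi>\<^sub>0 D\<^sup>2 + \<phi>\<^sub>1 D\<close>. The spread is a convex seminorm and \<open>h\<close> is convex and increasing on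
  \<open>[0,\<infinity>)\<close>, so \<open>T\<close> is convex. Adding a constant vector leaves \<open>T\<close> unchanged, so the conjugate
  is infinite unless \<open>\<Sum> \<lambda> = 0\<close>. In that case, centring \<open>g\<close> at the midpoint of its range gives
  \<open>g \<bullet> \<lambda> \<le> D(g) \<parallel>\<lambda>\<parallel>\<^sub>1/2\<close>, with equality for \<open>g\<close> a multiple of the indicator of \<open>{\<lambda> > 0}\<close>;
  hence \<open>T\<^sup>*(\<lambda>) = h\<^sup>*(\<parallel>\<lambda>\<parallel>\<^sub>1/2)\<close>, and the one-dimensional conjugate \<open>h\<^sup>*\<close> is \<open>s\<close>. Conversely
  \<open>\<lambda> = x(e\<^sub>i - e\<^sub>j)\<close>, with \<open>i, j\<close> the positions of the maximum and minimum of \<open>g\<close> and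
  \<open>x = h'(D(g))\<close>, attains \<open>T(g)\<close> in the biconjugate.
\<close>

lemma vmax_ge: "g $ i \<le> vmax g"
  unfolding vmax_def by (rule Max_ge) auto

lemma vmin_le: "vmin g \<le> g $ i"
  unfolding vmin_def by (rule Min_le) auto

lemma vmax_attained: obtains i where "g $ i = vmax g"
proof -
  have "vmax g \<in> range (\<lambda>i. g $ i)" unfolding vmax_def by (rule Max_in) auto
  then show ?thesis using that by auto
qed

lemma vmin_attained: obtains i where "g $ i = vmin g"
proof -
  have "vmin g \<in> range (\<lambda>i. g $ i)" unfolding vmin_def by (rule Min_in) auto
  then show ?thesis using that by auto
qed

lemma vmax_le: "(\<And>i. g $ i \<le> b) \<Longrightarrow> vmax g \<le> b"
  by (metis vmax_attained)

lemma vmin_ge: "(\<And>i. b \<le> g $ i) \<Longrightarrow> b \<le> vmin g"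
  by (metis vmin_attained)

abbreviation spread :: "real ^ 'm \<Rightarrow> real" where
  "spread g \<equiv> vmax g - vmin g"

lemma spread_nonneg: "0 \<le> spread g"
  using vmax_ge[of g] vmin_le[of g] by (meson diff_ge_0_iff_ge order_trans)

lemma spread_le: "(\<And>i. a \<le> g $ i \<and> g $ i \<le> b) \<Longrightarrow> spread g \<le> b - a"
  using vmax_le[of g b] vmin_ge[of a g] by force

lemma spread_vec [simp]: "spread (vec t :: real ^ 'm) = 0"
  by (simp add: vmax_def vmin_def)

lemma convex_on_spread: "convex_on UNIV (spread :: real ^ 'm \<Rightarrow> real)"
proof (rule convex_onI)
  fix t :: real and x y :: "real ^ 'm"
  assume "0 < t" "t < 1"
  then have t: "0 \<le> t" "0 \<le> 1 - t" by auto
  let ?z = "(1 - t) *\<^sub>R x + t *\<^sub>R y"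
  have "vmax ?z \<le> (1 - t) * vmax x + t * vmax y"
    using t by (intro vmax_le) (simp add: add_mono mult_left_mono vmax_ge)
  moreover have "(1 - t) * vmin x + t * vmin y \<le> vmin ?z"
    using t by (intro vmin_ge) (simp add: add_mono mult_left_mono vmin_le)
  ultimately show "spread ?z \<le> (1 - t) * spread x + t * spread y"
    by (simp add: algebra_simps)
qed simp

lemma convex_on_mono_comp:
  fixes f :: "'a::real_vector \<Rightarrow> real"
  assumes f: "convex_on S f" and range: "f ` S \<subseteq> T" and "convex T"
    and h: "convex_on T h" "mono_on T h"
  shows "convex_on S (\<lambda>x. h (f x))"
proof (rule convex_onI)
  fix t :: real and x y
  assume t: "0 < t" "t < 1" and xy: "x \<in> S" "y \<in> S"
  let ?w = "(1 - t) * f x + t * f y"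
  have "?w \<in> T"
    using convexD_alt[OF \<open>convex T\<close>, of "f x" "f y" t] range xy t by auto
  moreover have "f ((1 - t) *\<^sub>R x + t *\<^sub>R y) \<in> T"
    using convexD_alt[OF convex_on_imp_convex[OF f] xy, of t] range t by auto
  ultimately have "h (f ((1 - t) *\<^sub>R x + t *\<^sub>R y)) \<le> h ?w"
    using convex_onD[OF f, of t x y] t xy by (intro mono_onD[OF h(2)]) auto
  also have "\<dots> \<le> (1 - t) * h (f x) + t * h (f y)"
    using convex_onD[OF h(1), of t "f x" "f y"] range xy t by auto
  finally show "h (f ((1 - t) *\<^sub>R x + t *\<^sub>R y)) \<le> (1 - t) * h (f x) + t * h (f y)" .
qed (use convex_on_imp_convex[OF f] in simp)

definition penalty :: "real \<Rightarrow> real \<Rightarrow> real \<Rightarrow> real" where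
  "penalty p0 p1 D = p0 * D^2 + p1 * D"

lemma That_eq_penalty: "That p0 p1 g = penalty p0 p1 (spread g)"
  by (simp add: That_def penalty_def)

lemma penalty_mono:
  assumes "0 \<le> p0" "0 \<le> p1" "0 \<le> a" "a \<le> b"
  shows "penalty p0 p1 a \<le> penalty p0 p1 b"
  unfolding penalty_def using assms by (intro add_mono mult_left_mono power_mono) auto

lemma convex_on_penalty:
  assumes "0 \<le> p0" "0 \<le> p1"
  shows "convex_on {0..} (penalty p0 p1)"
proof -
  have "convex_on {0..} (\<lambda>D. p0 * D^2 + p1 * D)"
    using assms convex_on_subset[OF convex_power2]
    by (intro convex_on_add convex_on_cmul) (auto simp: convex_on_ident)
  then show ?thesis by (simp add: penalty_def [abs_def])
qed

lemma convex_on_That: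
  assumes "0 \<le> p0" "0 \<le> p1"
  shows "convex_on UNIV (That p0 p1 :: real ^ 'm \<Rightarrow> real)"
  unfolding That_eq_penalty [abs_def]
  using assms spread_nonneg
  by (intro convex_on_mono_comp[OF convex_on_spread _ _ convex_on_penalty])
     (auto intro: mono_onI penalty_mono)

text \<open>\<open>sfun p0 p1\<close> is the conjugate of \<open>penalty p0 p1\<close> on \<open>[0,\<infinity>)\<close>.\<close>

lemma penalty_Young:
  assumes "0 < p0" "0 \<le> D"
  shows "D * x \<le> penalty p0 p1 D + sfun p0 p1 x"
proof (cases "p1 \<le> x")
  case True
  have "(x - p1)^2 / (4*p0) - (D * x - penalty p0 p1 D) = (2*p0*D - (x - p1))^2 / (4*p0)"
    using assms by (simp add: penalty_def field_simps power2_eq_square)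
  also have "\<dots> \<ge> 0" using assms by simp
  finally show ?thesis using True by (simp add: sfun_def)
next
  case False
  then have "D * (x - p1) \<le> 0" using assms by (simp add: mult_nonneg_nonpos)
  moreover have "0 \<le> p0 * D^2" using assms by simp
  ultimately show ?thesis using False by (simp add: sfun_def penalty_def algebra_simps)
qed

lemma sfun_eq_at_maximiser:
  assumes "0 < p0" "D = max 0 ((x - p1) / (2 * p0))"
  shows "sfun p0 p1 x = D * x - penalty p0 p1 D"
proof (cases "p1 \<le> x")
  case True
  then have "x - p1 = 2 * p0 * D" using assms by simp
  then have "sfun p0 p1 x = p0 * D^2" and "D * x - penalty p0 p1 D = p0 * D^2"
    using True assms(1) by (simp_all add: sfun_def penalty_def power2_eq_square algebra_simps)
  then show ?thesis by simp
next
  case False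
  then have "D = 0" using assms by (simp add: divide_nonpos_pos)
  then show ?thesis using False by (simp add: sfun_def penalty_def)
qed

lemma inner_le_spread_half_l1norm:
  fixes g lam :: "real ^ 'm"
  assumes "(\<Sum>c\<in>UNIV. lam $ c) = 0"
  shows "g \<bullet> lam \<le> spread g * (l1norm lam / 2)"
proof -
  define mid where "mid = (vmax g + vmin g) / 2"
  have "g \<bullet> lam = (\<Sum>i\<in>UNIV. g $ i * lam $ i) - mid * (\<Sum>i\<in>UNIV. lam $ i)"
    using assms by (simp add: inner_vec_def)
  also have "\<dots> = (\<Sum>i\<in>UNIV. (g $ i - mid) * lam $ i)"
    by (simp add: sum_distrib_left sum_subtractf left_diff_distrib)
  also have "\<dots> \<le> (\<Sum>i\<in>UNIV. spread g / 2 * \<bar>lam $ i\<bar>)"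
  proof (rule sum_mono)
    fix i
    have "\<bar>g $ i - mid\<bar> \<le> spread g / 2"
      using vmax_ge[of g i] vmin_le[of g i] unfolding mid_def abs_le_iff by (auto simp: field_simps)
    then have "\<bar>g $ i - mid\<bar> * \<bar>lam $ i\<bar> \<le> spread g / 2 * \<bar>lam $ i\<bar>"
      by (rule mult_right_mono) simp
    then show "(g $ i - mid) * lam $ i \<le> spread g / 2 * \<bar>lam $ i\<bar>"
      by (metis abs_ge_self abs_mult order_trans)
  qed
  also have "\<dots> = spread g / 2 * l1norm lam"
    by (simp only: l1norm_def sum_distrib_left)
  finally show ?thesis by simp
qed

lemma Fenchel_Young_That:
  fixes g lam :: "real ^ 'm"
  assumes "0 < p0" "(\<Sum>c\<in>UNIV. lam $ c) = 0"
  shows "g \<bullet> lam \<le> That p0 p1 g + sfun p0 p1 (l1norm lam / 2)"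
  using inner_le_spread_half_l1norm[OF assms(2), of g]
    penalty_Young[OF assms(1) spread_nonneg, of g "l1norm lam / 2" p1]
  by (simp add: That_eq_penalty mult.commute)

lemma l1norm_eq_twice_positive_part:
  fixes lam :: "real ^ 'm"
  assumes "(\<Sum>c\<in>UNIV. lam $ c) = 0"
  shows "l1norm lam = 2 * (\<Sum>c\<in>UNIV. max (lam $ c) 0)"
proof -
  have "l1norm lam = (\<Sum>c\<in>UNIV. 2 * max (lam $ c) 0 - lam $ c)"
    unfolding l1norm_def by (intro sum.cong) auto
  then show ?thesis using assms by (simp add: sum_subtractf sum_distrib_left)
qed

lemma conjT_ge_instance: "ereal (g \<bullet> lam - That p0 p1 g) \<le> conjT p0 p1 lam"
  unfolding conjT_def by (rule SUP_upper) simp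

lemma conjT_eq_infinity:
  fixes lam :: "real ^ 'm"
  assumes sum: "(\<Sum>c\<in>UNIV. lam $ c) \<noteq> 0"
  shows "conjT p0 p1 lam = \<infinity>"
proof -
  have "ereal r < conjT p0 p1 lam" for r
  proof -
    define t where "t = (\<bar>r\<bar> + 1) / (\<Sum>c\<in>UNIV. lam $ c)"
    have "(vec t :: real ^ 'm) \<bullet> lam = t * (\<Sum>c\<in>UNIV. lam $ c)"
      by (simp add: inner_vec_def sum_distrib_left)
    then have "(vec t :: real ^ 'm) \<bullet> lam = \<bar>r\<bar> + 1"
      using sum by (simp add: t_def)
    then have "ereal r < ereal ((vec t :: real ^ 'm) \<bullet> lam - That p0 p1 (vec t))"
      by (simp add: That_eq_penalty penalty_def)
    also note conjT_ge_instance
    finally show ?thesis .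
  qed
  then show ?thesis by (cases "conjT p0 p1 lam") (fastforce+)
qed

lemma conjT_le_sfun:
  fixes lam :: "real ^ 'm"
  assumes "0 < p0" "(\<Sum>c\<in>UNIV. lam $ c) = 0"
  shows "conjT p0 p1 lam \<le> ereal (sfun p0 p1 (l1norm lam / 2))"
  unfolding conjT_def
proof (rule SUP_least)
  fix g :: "real ^ 'm"
  show "ereal (g \<bullet> lam - That p0 p1 g) \<le> ereal (sfun p0 p1 (l1norm lam / 2))"
    using Fenchel_Young_That[OF assms, of g p1] by simp
qed

lemma sfun_le_conjT:
  fixes lam :: "real ^ 'm"
  assumes p: "0 < p0" "0 \<le> p1" and sum: "(\<Sum>c\<in>UNIV. lam $ c) = 0"
  shows "ereal (sfun p0 p1 (l1norm lam / 2)) \<le> conjT p0 p1 lam"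
proof -
  define x where "x = l1norm lam / 2"
  define D where "D = max 0 ((x - p1) / (2 * p0))"
  define g :: "real ^ 'm" where "g = (\<chi> c. if 0 < lam $ c then D else 0)"
  have "D \<ge> 0" by (simp add: D_def)
  have "g \<bullet> lam = D * (\<Sum>c\<in>UNIV. max (lam $ c) 0)"
    unfolding inner_vec_def sum_distrib_left by (intro sum.cong) (auto simp: g_def)
  then have inner: "g \<bullet> lam = D * x"
    using l1norm_eq_twice_positive_part[OF sum] by (simp add: x_def)
  have "spread g \<le> D - 0"
    using \<open>D \<ge> 0\<close> by (intro spread_le) (simp add: g_def)
  then have "That p0 p1 g \<le> penalty p0 p1 D"
    unfolding That_eq_penalty using p spread_nonneg by (intro penalty_mono) auto
  then have "ereal (sfun p0 p1 x) \<le> ereal (g \<bullet> lam - That p0 p1 g)"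
    using sfun_eq_at_maximiser[OF p(1) D_def] inner by simp
  also note conjT_ge_instance
  finally show ?thesis by (simp add: x_def)
qed

lemma conjT_eq:
  fixes lam :: "real ^ 'm"
  assumes "0 < p0" "0 \<le> p1"
  shows "conjT p0 p1 lam =
     (if (\<Sum>c\<in>UNIV. lam $ c) = 0 then ereal (sfun p0 p1 (l1norm lam / 2)) else \<infinity>)"
  using conjT_le_sfun[OF assms(1)] sfun_le_conjT[OF assms] conjT_eq_infinity
  by (auto intro: antisym)

lemma biconjT_le_That:
  fixes g :: "real ^ 'm"
  assumes "0 < p0" "0 \<le> p1"
  shows "biconjT p0 p1 g \<le> ereal (That p0 p1 g)"
  unfolding biconjT_def
proof (rule SUP_least)
  fix lam :: "real ^ 'm"
  show "ereal (g \<bullet> lam) - conjT p0 p1 lam \<le> ereal (That p0 p1 g)"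
    using Fenchel_Young_That[OF assms(1), of lam g p1]
    by (cases "(\<Sum>c\<in>UNIV. lam $ c) = 0") (simp_all add: conjT_eq[OF assms])
qed

lemma That_le_biconjT:
  fixes g :: "real ^ 'm"
  assumes p: "0 < p0" "0 \<le> p1"
  shows "ereal (That p0 p1 g) \<le> biconjT p0 p1 g"
proof -
  obtain i j where i: "g $ i = vmax g" and j: "g $ j = vmin g"
    by (metis vmax_attained vmin_attained)
  define D where "D = spread g"
  define x where "x = p1 + 2 * p0 * D"
  define lam :: "real ^ 'm" where "lam = axis i x - axis j x"
  have "D \<ge> 0" "x \<ge> 0" using p spread_nonneg[of g] by (auto simp: D_def x_def)
  have sum: "(\<Sum>c\<in>UNIV. lam $ c) = 0"
    by (simp add: lam_def axis_def sum_subtractf)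
  have "ereal (That p0 p1 g) = ereal (g \<bullet> lam) - ereal (sfun p0 p1 (l1norm lam / 2))"
  proof (cases "i = j")
    case True
    then show ?thesis using i j p by (simp add: lam_def That_eq_penalty penalty_def sfun_def l1norm_def)
  next
    case False
    have "l1norm lam = (\<Sum>c\<in>UNIV. (if c = i then x else 0) + (if c = j then x else 0))"
      unfolding l1norm_def using False \<open>x \<ge> 0\<close> by (intro sum.cong) (auto simp: lam_def axis_def)
    then have "l1norm lam / 2 = x" by (simp add: sum.distrib)
    moreover have "g \<bullet> lam = D * x"
      using i j by (simp add: lam_def inner_diff_right inner_axis D_def algebra_simps)
    moreover have "D = max 0 ((x - p1) / (2 * p0))"
      using p \<open>D \<ge> 0\<close> by (simp add: x_def)
    ultimately show ?thesis
      using sfun_eq_at_maximiser[OF p(1)] by (simp add: That_eq_penalty D_def)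
  qed
  also have "\<dots> \<le> biconjT p0 p1 g"
    unfolding biconjT_def conjT_eq[OF p] using sum by (intro SUP_upper2[of lam]) auto
  finally show ?thesis .
qed

theorem mainTheorem1:
  fixes \<phi>0 \<phi>1 :: real
  assumes "\<phi>0 > 0" and "\<phi>1 \<ge> 0"
  shows "convex_on UNIV (That \<phi>0 \<phi>1 :: real ^ 'm \<Rightarrow> real) \<and>
    (\<forall>lam :: real ^ 'm. conjT \<phi>0 \<phi>1 lam =
           (if (\<Sum>c\<in>UNIV. lam $ c) = 0 then ereal (sfun \<phi>0 \<phi>1 (l1norm lam / 2)) else \<infinity>)) \<and>
    (\<forall>g :: real ^ 'm. ereal (That \<phi>0 \<phi>1 g) = biconjT \<phi>0 \<phi>1 g)"
proof (intro conjI allI)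
  show "convex_on UNIV (That \<phi>0 \<phi>1 :: real ^ 'm \<Rightarrow> real)"
    using assms by (intro convex_on_That) auto
  show "conjT \<phi>0 \<phi>1 lam =
      (if (\<Sum>c\<in>UNIV. lam $ c) = 0 then ereal (sfun \<phi>0 \<phi>1 (l1norm lam / 2)) else \<infinity>)"
    for lam :: "real ^ 'm"
    by (rule conjT_eq[OF assms])
  show "ereal (That \<phi>0 \<phi>1 g) = biconjT \<phi>0 \<phi>1 g" for g :: "real ^ 'm"
    by (rule order_antisym[OF That_le_biconjT[OF assms] biconjT_le_That[OF assms]])
qed

end
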